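(* Let $d,n\ge1$ be integers and let $X=I_1\cup\dots\cup I_d$ be the disjoint union of $d$ copies $I_1,\dots,I_d$ of the unit interval $[0,1]$. Let $H$ be the (infinite) family of all sets $e=e^1\cup\dots\cup e^d\subseteq X$, with each $e^j$ empty or a closed interval in $I_j$, whose total length $|e|=\sum_j|e^j|$ satisfies $|e|>\frac1n$. Then: (1) every set $C\subseteq X$ meeting every member of $H$ satisfies $|C|\ge nd^2-d$; (2) for every finitely supported function $\alpha:H\to\mathbb{R}_{\ge0}$ such that $\sum_{e\in H,\,x\in e}\alpha(e)\le1$ for every $x\in X$, one has $\sum_{e\in H}\alpha(e)< nd$ (when $\alpha\not\equiv0$) and in any case $\sum_{e}\alpha(e)\le nd$.
   Context: $|e^j|$ denotes the length of the interval $e^j$ (zero if empty). *)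

theory Defs
  imports Complex_Main
begin

text \<open>The space X: d disjoint copies of [0,1]; copy j (0 \<le> j < d) is {j} \<times> [0,1].\<close>
definition copies :: "nat \<Rightarrow> (nat \<times> real) set" where
  "copies d = {..<d} \<times> {0..1}"

definition slice :: "(nat \<times> real) set \<Rightarrow> nat \<Rightarrow> real set" where
  "slice e j = {t. (j, t) \<in> e}"

definition closed_ivl_or_empty :: "real set \<Rightarrow> bool" where
  "closed_ivl_or_empty S \<longleftrightarrow> S = {} \<or> (\<exists>a b. 0 \<le> a \<and> a \<le> b \<and> b \<le> 1 \<and> S = {a..b})"

definition ivl_len :: "real set \<Rightarrow> real" where
  "ivl_len S = (if S = {} then 0 else Sup S - Inf S)"

definition tot_len :: "nat \<Rightarrow> (nat \<times> real) set \<Rightarrow> real" where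
  "tot_len d e = (\<Sum>j<d. ivl_len (slice e j))"

definition edges :: "nat \<Rightarrow> nat \<Rightarrow> (nat \<times> real) set set" where
  "edges d n = {e. e \<subseteq> copies d \<and> (\<forall>j<d. closed_ivl_or_empty (slice e j))
                   \<and> tot_len d e > 1 / real n}"

end

theory Submission imports Defs "HOL-Analysis.Analysis" begin

(* Write k_j for the number of points a finite set C \<subseteq> X places in copy j.
   (1) Covering bound.  The k_j points cut I_j into k_j + 1 open gaps, one of
       length at least 1/(k_j + 1), and a closed interval of almost that length
       fits inside it.  Combining such intervals over all copies gives a member
       of H missed by C unless \<Sum>_j 1/(k_j+1) \<le> 1/n.  Cauchy-Schwarz,
       d^2 \<le> (\<Sum>_j (k_j+1)) (\<Sum>_j 1/(k_j+1)), then gives |C| + d \<ge> n d^2.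
   (2) Packing bound.  On each copy, integrating the pointwise load
       \<Sum>_{x\<in>e} \<alpha>(e) \<le> 1 over [0,1] shows \<Sum>_e \<alpha>(e)|e^j| \<le> 1; summing over
       the copies gives \<Sum>_e \<alpha>(e)|e| \<le> d, and |e| > 1/n yields \<Sum>_e \<alpha>(e) < nd. *)

lemma ivl_len_atLeastAtMost: "(a::real) \<le> b \<Longrightarrow> ivl_len {a..b} = b - a"
  by (simp add: ivl_len_def)

lemma indicator_ivl_has_integral:
  assumes "closed_ivl_or_empty S"
  shows "(indicator S has_integral ivl_len S) {0..1::real}"
proof (cases "S = {}")
  case True
  have "indicator {} = (\<lambda>x::real. 0::real)" by (rule ext) simp
  then show ?thesis using True by (simp add: ivl_len_def)
next
  case False
  then obtain a b where ab: "0 \<le> a" "a \<le> b" "b \<le> 1" "S = {a..b}"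
    using assms closed_ivl_or_empty_def by blast
  have "((\<lambda>x. if x \<in> S then (1::real) else 0) has_integral (b - a)) {0..1}"
    using ab has_integral_const_real[of "1::real" a b]
    by (subst has_integral_restrict) auto
  moreover have "indicator S = (\<lambda>x::real. if x \<in> S then 1::real else 0)"
    by (rule ext) (simp add: indicator_def)
  ultimately show ?thesis using ab by (simp add: ivl_len_atLeastAtMost)
qed

text \<open>Induction on m: split (u,v) at one point of K; one side keeps a large ratio.\<close>
lemma gap_avoiding_finite_set:
  fixes K :: "real set"
  assumes "finite K" "u < v" "0 \<le> L" "L < (v - u) / (real (card (K \<inter> {u<..<v})) + 1)"
  shows "\<exists>a b. u < a \<and> a \<le> b \<and> b < v \<and> L \<le> b - a \<and> {a..b} \<inter> K = {}"
  using assms(2-)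
proof (induction "card (K \<inter> {u<..<v})" arbitrary: u v rule: less_induct)
  case less
  show ?case
  proof (cases "K \<inter> {u<..<v} = {}")
    case empty: True
    define \<eta> where "\<eta> = (v - u - L) / 2"
    have "\<eta> > 0" using less.prems empty by (simp add: \<eta>_def)
    have "{u + \<eta>..v - \<eta>} \<inter> K = {}"
      using empty \<open>\<eta> > 0\<close> by force
    moreover have "u < u + \<eta>" "u + \<eta> \<le> v - \<eta>" "v - \<eta> < v" "L \<le> (v - \<eta>) - (u + \<eta>)"
      using less.prems \<open>\<eta> > 0\<close> by (auto simp: \<eta>_def field_simps)
    ultimately show ?thesis by blast
  next
    case False
    then obtain p where p: "p \<in> K" "u < p" "p < v" by auto
    define c1 where "c1 = card (K \<inter> {u<..<p})"
    define c2 where "c2 = card (K \<inter> {p<..<v})"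
    have split: "K \<inter> {u<..<v} = (K \<inter> {u<..<p}) \<union> (K \<inter> {p<..<v}) \<union> {p}"
      using p by auto
    have "card (K \<inter> {u<..<v}) = card ((K \<inter> {u<..<p}) \<union> (K \<inter> {p<..<v})) + card {p}"
      unfolding split by (rule card_Un_disjoint) (use \<open>finite K\<close> in auto)
    also have "card ((K \<inter> {u<..<p}) \<union> (K \<inter> {p<..<v})) = c1 + c2"
      unfolding c1_def c2_def by (rule card_Un_disjoint) (use \<open>finite K\<close> in auto)
    finally have card_split: "card (K \<inter> {u<..<v}) = c1 + c2 + 1" by simp
    have "L < (p - u) / (real c1 + 1) \<or> L < (v - p) / (real c2 + 1)"
    proof (rule ccontr)
      assume "\<not> ?thesis"
      then have "p - u \<le> L * (c1 + 1)" "v - p \<le> L * (c2 + 1)"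
        by (auto simp: field_simps)
      then have "v - u \<le> L * (c1 + c2 + 2)" by (simp add: algebra_simps)
      then show False using less.prems card_split by (simp add: field_simps)
    qed
    then show ?thesis
    proof
      assume "L < (p - u) / (real c1 + 1)"
      moreover have "c1 < card (K \<inter> {u<..<v})" using card_split by simp
      ultimately obtain a b where "u < a \<and> a \<le> b \<and> b < p \<and> L \<le> b - a \<and> {a..b} \<inter> K = {}"
        using less.hyps[of u p] p less.prems unfolding c1_def by blast
      then show ?thesis using p by (meson order.strict_trans)
    next
      assume "L < (v - p) / (real c2 + 1)"
      moreover have "c2 < card (K \<inter> {u<..<v})" using card_split by simp
      ultimately obtain a b where "p < a \<and> a \<le> b \<and> b < v \<and> L \<le> b - a \<and> {a..b} \<inter> K = {}"
        using less.hyps[of p v] p less.prems unfolding c2_def by blast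
      then show ?thesis using p by (meson order.strict_trans)
    qed
  qed
qed

lemma gap_in_unit_interval:
  fixes K :: "real set"
  assumes "finite K" "0 \<le> L" "L < 1 / (real (card K) + 1)"
  shows "\<exists>a b. 0 \<le> a \<and> a \<le> b \<and> b \<le> 1 \<and> L \<le> b - a \<and> {a..b} \<inter> K = {}"
proof -
  have "card (K \<inter> {0<..<1}) \<le> card K" by (rule card_mono) (use assms in auto)
  then have "1 / (real (card K) + 1) \<le> (1 - 0) / (real (card (K \<inter> {0<..<1})) + 1)"
    by (simp add: frac_le)
  then have "L < (1 - 0) / (real (card (K \<inter> {0<..<1})) + 1)"
    using assms(3) by linarith
  then obtain a b where "0 < a \<and> a \<le> b \<and> b < 1 \<and> L \<le> b - a \<and> {a..b} \<inter> K = {}"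
    using gap_avoiding_finite_set[OF assms(1) zero_less_one assms(2)] by blast
  then show ?thesis by (intro exI[of _ a] exI[of _ b]) auto
qed

lemma finite_slice: "finite C \<Longrightarrow> finite (slice C j)"
  using finite_surj[of C "slice C j" snd] by (force simp: slice_def)

lemma edge_of_intervals:
  assumes "\<And>j. j < d \<Longrightarrow> 0 \<le> a j \<and> a j \<le> b j \<and> b j \<le> 1"
    and "1 / real n < (\<Sum>j<d. b j - a j)"
  shows "{(j, t). j < d \<and> a j \<le> t \<and> t \<le> b j} \<in> edges d n"
proof -
  define e where "e = {(j, t). j < d \<and> a j \<le> t \<and> t \<le> b j}"
  have slice_e: "slice e j = {a j..b j}" if "j < d" for j
    using that by (auto simp: e_def slice_def)
  have "e \<subseteq> copies d" using assms(1) by (force simp: e_def copies_def)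
  moreover have "closed_ivl_or_empty (slice e j)" if "j < d" for j
    using that assms(1)[of j] slice_e[of j] unfolding closed_ivl_or_empty_def by blast
  moreover have "tot_len d e = (\<Sum>j<d. b j - a j)"
    unfolding tot_len_def using slice_e assms(1) by (intro sum.cong) (auto simp: ivl_len_atLeastAtMost)
  ultimately have "e \<in> edges d n" using assms(2) by (simp add: edges_def)
  then show ?thesis by (simp add: e_def)
qed

text \<open>If the reciprocal point counts of a finite C sum to more than 1/n, some
  member of H misses C: in copy j take a gap of length 1/(k_j+1) - \<delta>.\<close>
lemma avoiding_edge_exists:
  assumes "d \<ge> 1" and fin: "finite C"
    and big: "1 / real n < (\<Sum>j<d. 1 / (real (card (slice C j)) + 1))"
  shows "\<exists>e\<in>edges d n. C \<inter> e = {}"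
proof -
  define recip_sum where "recip_sum = (\<Sum>j<d. 1 / (real (card (slice C j)) + 1))"
  define \<delta> where "\<delta> = (recip_sum - 1 / real n) / (2 * real d)"
  define L where "L j = max 0 (1 / (real (card (slice C j)) + 1) - \<delta>)" for j
  have "\<delta> > 0" using big \<open>d \<ge> 1\<close> by (simp add: \<delta>_def recip_sum_def)
  have "\<forall>j. \<exists>ab. 0 \<le> fst ab \<and> fst ab \<le> snd ab \<and> snd ab \<le> 1 \<and> L j \<le> snd ab - fst ab
             \<and> {fst ab..snd ab} \<inter> slice C j = {}"
  proof
    fix j
    have "L j < 1 / (real (card (slice C j)) + 1)"
      using \<open>\<delta> > 0\<close> by (simp add: L_def)
    from gap_in_unit_interval[OF finite_slice[OF fin] _ this] show "\<exists>ab. 0 \<le> fst ab \<and> fst ab \<le> snd ab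
        \<and> snd ab \<le> 1 \<and> L j \<le> snd ab - fst ab \<and> {fst ab..snd ab} \<inter> slice C j = {}"
      by (auto simp: L_def)
  qed
  from choice[OF this] obtain ab where ab: "\<And>j. 0 \<le> fst (ab j) \<and> fst (ab j) \<le> snd (ab j)
      \<and> snd (ab j) \<le> 1 \<and> L j \<le> snd (ab j) - fst (ab j) \<and> {fst (ab j)..snd (ab j)} \<inter> slice C j = {}"
    by blast
  have "real d * \<delta> = (recip_sum - 1 / real n) / 2" using \<open>d \<ge> 1\<close> by (simp add: \<delta>_def)
  moreover have "1 / real n < recip_sum" using big by (simp add: recip_sum_def)
  ultimately have "1 / real n < recip_sum - real d * \<delta>" by argo
  also have "recip_sum - real d * \<delta> = (\<Sum>j<d. 1 / (real (card (slice C j)) + 1) - \<delta>)"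
    by (simp add: sum_subtractf recip_sum_def)
  also have "\<dots> \<le> (\<Sum>j<d. snd (ab j) - fst (ab j))"
  proof (rule sum_mono)
    fix j
    have "1 / (real (card (slice C j)) + 1) - \<delta> \<le> L j" by (simp add: L_def)
    then show "1 / (real (card (slice C j)) + 1) - \<delta> \<le> snd (ab j) - fst (ab j)"
      using ab[of j] by linarith
  qed
  finally have "{(j, t). j < d \<and> fst (ab j) \<le> t \<and> t \<le> snd (ab j)} \<in> edges d n"
    using ab by (intro edge_of_intervals) auto
  moreover have "C \<inter> {(j, t). j < d \<and> fst (ab j) \<le> t \<and> t \<le> snd (ab j)} = {}"
  proof -
    have "(j, t) \<notin> C" if "fst (ab j) \<le> t" "t \<le> snd (ab j)" for j t
      using that ab[of j] by (auto simp: slice_def)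
    then show ?thesis by auto
  qed
  ultimately show ?thesis by blast
qed

section \<open>Part (1): covering sets are large\<close>

text \<open>Cauchy-Schwarz in the form d^2 \<le> (\<Sum> x_j)(\<Sum> 1/x_j) for positive x_j.\<close>
lemma sum_times_sum_reciprocals:
  fixes x :: "nat \<Rightarrow> real"
  assumes "\<And>j. x j > 0"
  shows "real d ^ 2 \<le> (\<Sum>j<d. x j) * (\<Sum>j<d. 1 / x j)"
proof -
  have "(\<Sum>j<d. sqrt (x j) * (1 / sqrt (x j)))\<^sup>2
        \<le> (\<Sum>j<d. (sqrt (x j))\<^sup>2) * (\<Sum>j<d. (1 / sqrt (x j))\<^sup>2)"
    by (rule Cauchy_Schwarz_ineq_sum)
  moreover have "sqrt (x j) * (1 / sqrt (x j)) = 1" "(sqrt (x j))\<^sup>2 = x j"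
    "(1 / sqrt (x j))\<^sup>2 = 1 / x j" for j
    using assms[of j] by (auto simp: power_divide)
  ultimately show ?thesis by simp
qed

lemma card_by_slices:
  assumes "C \<subseteq> copies d" "finite C"
  shows "card C = (\<Sum>j<d. card (slice C j))"
proof -
  have "C = Sigma {..<d} (slice C)" using assms(1) by (auto simp: slice_def copies_def)
  then show ?thesis using finite_slice[OF assms(2)] by (metis card_SigmaI finite_lessThan)
qed

text \<open>Part (1) for finite C: the reciprocal counts sum to at most 1/n, and
  Cauchy-Schwarz turns this into n d^2 \<le> \<Sum>_j (k_j + 1) = |C| + d.\<close>
theorem covering_bound:
  assumes "d \<ge> 1" "n \<ge> 1" "C \<subseteq> copies d" "\<forall>e\<in>edges d n. C \<inter> e \<noteq> {}" "finite C"
  shows "n * d ^ 2 \<le> card C + d"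
proof -
  define k where "k j = real (card (slice C j)) + 1" for j
  have recip: "(\<Sum>j<d. 1 / k j) \<le> 1 / real n"
    using avoiding_edge_exists[OF assms(1,5), of n] assms(4) by (force simp: k_def)
  have "real d ^ 2 \<le> (\<Sum>j<d. k j) * (\<Sum>j<d. 1 / k j)"
    by (rule sum_times_sum_reciprocals) (simp add: k_def)
  also have "\<dots> \<le> (\<Sum>j<d. k j) * (1 / real n)"
    using recip by (intro mult_left_mono) (auto simp: k_def intro: sum_nonneg)
  finally have "real n * real d ^ 2 \<le> (\<Sum>j<d. k j)"
    using assms(2) by (simp add: field_simps)
  also have "\<dots> = real (card C + d)"
    using card_by_slices[OF assms(3,5)] by (simp add: k_def sum.distrib)
  finally show ?thesis by (simp flip: of_nat_power of_nat_mult)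
qed

section \<open>Part (2): fractional packings are small\<close>

text \<open>One-dimensional fractional packing: weighted closed intervals in [0,1]
  whose pointwise load is at most 1 have weighted total length at most 1
  (integrate the load over [0,1]).\<close>
lemma weighted_interval_lengths:
  fixes w :: "'a \<Rightarrow> real" and I :: "'a \<Rightarrow> real set"
  assumes "finite S" "\<And>e. e \<in> S \<Longrightarrow> closed_ivl_or_empty (I e)"
    and load: "\<And>t. t \<in> {0..1} \<Longrightarrow> (\<Sum>e\<in>{e\<in>S. t \<in> I e}. w e) \<le> 1"
  shows "(\<Sum>e\<in>S. w e * ivl_len (I e)) \<le> 1"
proof -
  define f where "f t = (\<Sum>e\<in>S. w e * indicator (I e) t)" for t :: real
  have "(f has_integral (\<Sum>e\<in>S. w e * ivl_len (I e))) {0..1}"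
    unfolding f_def using assms(2)
    by (intro has_integral_sum[OF assms(1)] has_integral_mult_right indicator_ivl_has_integral)
  moreover have "((\<lambda>_. 1::real) has_integral 1) {0..1::real}"
    using has_integral_const_real[of "1::real" 0 1] by simp
  moreover have "f t \<le> 1" if "t \<in> {0..1}" for t
  proof -
    have "f t = (\<Sum>e\<in>S. if t \<in> I e then w e else 0)"
      unfolding f_def by (intro sum.cong) (auto simp: indicator_def)
    also have "\<dots> = (\<Sum>e\<in>{e\<in>S. t \<in> I e}. w e)"
      by (rule sum.inter_filter[symmetric, OF assms(1)])
    finally show ?thesis using load[OF that] by simp
  qed
  ultimately show ?thesis by (rule has_integral_le)
qed

text \<open>Summing the one-dimensional bound over the d copies.\<close>
lemma weighted_total_length:
  fixes \<alpha> :: "(nat \<times> real) set \<Rightarrow> real" and d n :: nat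
  defines "S \<equiv> {e\<in>edges d n. \<alpha> e \<noteq> 0}"
  assumes fin: "finite S"
    and load: "\<forall>x\<in>copies d. (\<Sum>e\<in>{e\<in>edges d n. x \<in> e \<and> \<alpha> e \<noteq> 0}. \<alpha> e) \<le> 1"
  shows "(\<Sum>e\<in>S. \<alpha> e * tot_len d e) \<le> real d"
proof -
  have copy: "(\<Sum>e\<in>S. \<alpha> e * ivl_len (slice e j)) \<le> 1" if "j < d" for j
  proof (rule weighted_interval_lengths[OF fin])
    show "closed_ivl_or_empty (slice e j)" if "e \<in> S" for e
      using \<open>e \<in> S\<close> \<open>j < d\<close> by (auto simp: S_def edges_def)
    fix t :: real assume "t \<in> {0..1}"
    moreover have "{e\<in>S. t \<in> slice e j} = {e\<in>edges d n. (j, t) \<in> e \<and> \<alpha> e \<noteq> 0}"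
      by (auto simp: S_def slice_def)
    ultimately show "(\<Sum>e\<in>{e\<in>S. t \<in> slice e j}. \<alpha> e) \<le> 1"
      using load \<open>j < d\<close> by (auto simp: copies_def)
  qed
  have "(\<Sum>e\<in>S. \<alpha> e * tot_len d e) = (\<Sum>j<d. \<Sum>e\<in>S. \<alpha> e * ivl_len (slice e j))"
    unfolding tot_len_def sum_distrib_left by (rule sum.swap)
  also have "\<dots> \<le> (\<Sum>j<(d::nat). 1)" using copy by (intro sum_mono) auto
  finally show ?thesis by simp
qed

text \<open>Since every member of H is longer than 1/n, a nonzero fractional packing
  has total weight strictly below n d.\<close>
theorem packing_bound:
  fixes \<alpha> :: "(nat \<times> real) set \<Rightarrow> real" and d n :: nat
  defines "S \<equiv> {e\<in>edges d n. \<alpha> e \<noteq> 0}"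
  assumes "n \<ge> 1" "\<forall>e\<in>edges d n. \<alpha> e \<ge> 0" "finite S" "S \<noteq> {}"
    and "\<forall>x\<in>copies d. (\<Sum>e\<in>{e\<in>edges d n. x \<in> e \<and> \<alpha> e \<noteq> 0}. \<alpha> e) \<le> 1"
  shows "(\<Sum>e\<in>S. \<alpha> e) < real (n * d)"
proof -
  have pos: "\<alpha> e > 0" "1 / real n < tot_len d e" if "e \<in> S" for e
    using that assms(3) by (auto simp: S_def edges_def order.order_iff_strict)
  have "(\<Sum>e\<in>S. \<alpha> e * (1 / real n)) < (\<Sum>e\<in>S. \<alpha> e * tot_len d e)"
    using pos assms(4,5) by (intro sum_strict_mono mult_strict_left_mono) auto
  also have "\<dots> \<le> real d"
    using weighted_total_length assms(4,6) unfolding S_def by blast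
  finally show ?thesis
    using assms(2) by (simp add: sum_divide_distrib[symmetric] field_simps)
qed

theorem mainTheorem15:
  fixes d n :: nat
  assumes "d \<ge> 1" and "n \<ge> 1"
  shows "(\<forall>C. C \<subseteq> copies d \<and> (\<forall>e\<in>edges d n. C \<inter> e \<noteq> {})
            \<longrightarrow> infinite C \<or> card C \<ge> n * d ^ 2 - d)
       \<and> (\<forall>\<alpha> :: (nat \<times> real) set \<Rightarrow> real.
            (\<forall>e\<in>edges d n. \<alpha> e \<ge> 0)
            \<and> finite {e\<in>edges d n. \<alpha> e \<noteq> 0}
            \<and> (\<forall>x\<in>copies d. (\<Sum>e\<in>{e\<in>edges d n. x \<in> e \<and> \<alpha> e \<noteq> 0}. \<alpha> e) \<le> 1)
            \<longrightarrow> ((\<exists>e\<in>edges d n. \<alpha> e \<noteq> 0)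
                   \<longrightarrow> (\<Sum>e\<in>{e\<in>edges d n. \<alpha> e \<noteq> 0}. \<alpha> e) < real (n * d))
              \<and> (\<Sum>e\<in>{e\<in>edges d n. \<alpha> e \<noteq> 0}. \<alpha> e) \<le> real (n * d))"
proof (intro conjI allI impI)
  fix C assume C: "C \<subseteq> copies d \<and> (\<forall>e\<in>edges d n. C \<inter> e \<noteq> {})"
  show "infinite C \<or> card C \<ge> n * d ^ 2 - d"
  proof (cases "finite C")
    case True
    have "n * d ^ 2 \<le> card C + d" by (rule covering_bound) (use assms C True in auto)
    then have "n * d ^ 2 - d \<le> card C" by linarith
    then show ?thesis by blast
  qed simp
next
  fix \<alpha> :: "(nat \<times> real) set \<Rightarrow> real"
  assume "(\<forall>e\<in>edges d n. \<alpha> e \<ge> 0) \<and> finite {e\<in>edges d n. \<alpha> e \<noteq> 0}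
            \<and> (\<forall>x\<in>copies d. (\<Sum>e\<in>{e\<in>edges d n. x \<in> e \<and> \<alpha> e \<noteq> 0}. \<alpha> e) \<le> 1)"
  then have strict: "{e\<in>edges d n. \<alpha> e \<noteq> 0} \<noteq> {} \<Longrightarrow>
      (\<Sum>e\<in>{e\<in>edges d n. \<alpha> e \<noteq> 0}. \<alpha> e) < real (n * d)"
    using packing_bound[OF assms(2)] by (elim conjE) assumption
  show "(\<Sum>e\<in>{e\<in>edges d n. \<alpha> e \<noteq> 0}. \<alpha> e) < real (n * d)"
    if "\<exists>e\<in>edges d n. \<alpha> e \<noteq> 0" using that by (intro strict) blast
  show "(\<Sum>e\<in>{e\<in>edges d n. \<alpha> e \<noteq> 0}. \<alpha> e) \<le> real (n * d)"
    using strict by (cases "{e\<in>edges d n. \<alpha> e \<noteq> 0} = {}") auto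
qed

end
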